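(* Let $M$ be a prefix matching and let $a_1\to b_1\to\cdots\to a_p\to b_p\to a_{p+1}=a_1$ be a directed cycle in $\Gamma^M$ as described in the context, with $a_i=(a_{i,0},\dots,a_{i,k})$. Assume that for all $i$, $d_i=c_i+1$ and $d(a_{i+1,c_i},a_{i+1,c_i+1})=1$. Then $d(a_{i,d_i-1},a_{i,d_i})=1$ for all $i$.
   Context: $G$ is a finite simple connected graph with distance $d$; $\ell(x_0,\dots,x_k)=\sum_{i=0}^{k-1}d(x_i,x_{i+1})$; sequences are elements of $I_{k,l}(G)=\{(x_0,\dots,x_k)\in V(G)^{k+1}:x_i\ne x_{i+1}\ \forall i,\ \ell=l\}$. $\Gamma$ is the directed graph on sequences with an edge $a\to b$ whenever $b$ is obtained from $a=(x_0,\dots,x_k)$ by deleting some $x_i$, $1\le i\le k-1$, with $\ell(b)=\ell(a)$. A matching is a set of pairwise vertex-disjoint edges of $\Gamma$; $\Gamma^M$ is $\Gamma$ with edges of $M$ reversed. Matching states: "unmatched", "insert$(i,v)$" (matched to $(x_0,\dots,x_i,v,x_{i+1},\dots,x_k)$), "delete$(i)$" (matched to $(x_0,\dots,\hat x_i,\dots,x_k)$). A prefix matching: whenever $(x_0,\dots,x_k)$ has state insert$(i,v)$ (resp. delete$(i)$), every sequence $(x_0,\dots,x_{i+1},y_{i+2},\dots,y_{k'})$ has the same state. Cycle setting: $a_i\in I_{k,l}(G)$, $b_i\in I_{k-1,l}(G)$, each $a_i\to b_i$ is an edge of $\Gamma$ not in $M$, each $b_i\to a_{i+1}$ is a reversed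 edge of $M$; $d_i$ is the position of the entry of $a_i$ deleted to obtain $b_i$; $a_{i+1}=(b_{i,0},\dots,b_{i,c_i},u_i,b_{i,c_i+1},\dots,b_{i,k-1})$ where $b_i=(b_{i,0},\dots,b_{i,k-1})$; indices $i$ are taken modulo $p$. *)

theory Defs
  imports Main
begin

definition gwalk :: "('a \<Rightarrow> 'a \<Rightarrow> bool) \<Rightarrow> 'a list \<Rightarrow> bool" where
  "gwalk E ps \<longleftrightarrow> ps \<noteq> [] \<and> (\<forall>j. Suc j < length ps \<longrightarrow> E (ps ! j) (ps ! Suc j))"

definition simple_connected_graph :: "'a set \<Rightarrow> ('a \<Rightarrow> 'a \<Rightarrow> bool) \<Rightarrow> bool" where
  "simple_connected_graph V E \<longleftrightarrow>
     finite V \<and> V \<noteq> {} \<and>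
     (\<forall>x y. E x y \<longrightarrow> x \<in> V \<and> y \<in> V) \<and>
     (\<forall>x y. E x y \<longrightarrow> E y x) \<and>
     (\<forall>x. \<not> E x x) \<and>
     (\<forall>x\<in>V. \<forall>y\<in>V. \<exists>ps. gwalk E ps \<and> hd ps = x \<and> last ps = y)"

definition gdist :: "('a \<Rightarrow> 'a \<Rightarrow> bool) \<Rightarrow> 'a \<Rightarrow> 'a \<Rightarrow> nat" where
  "gdist E x y = (LEAST n. \<exists>ps. gwalk E ps \<and> hd ps = x \<and> last ps = y \<and> length ps = Suc n)"

definition ell :: "('a \<Rightarrow> 'a \<Rightarrow> bool) \<Rightarrow> 'a list \<Rightarrow> nat" where
  "ell E xs = (\<Sum>j < length xs - 1. gdist E (xs ! j) (xs ! Suc j))"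

definition seqs :: "'a set \<Rightarrow> ('a \<Rightarrow> 'a \<Rightarrow> bool) \<Rightarrow> 'a list set" where
  "seqs V E = {xs. xs \<noteq> [] \<and> set xs \<subseteq> V \<and> (\<forall>j. Suc j < length xs \<longrightarrow> xs ! j \<noteq> xs ! Suc j)}"

definition Ikl :: "'a set \<Rightarrow> ('a \<Rightarrow> 'a \<Rightarrow> bool) \<Rightarrow> nat \<Rightarrow> nat \<Rightarrow> 'a list set" where
  "Ikl V E k l = {xs \<in> seqs V E. length xs = Suc k \<and> ell E xs = l}"

definition del_at :: "nat \<Rightarrow> 'a list \<Rightarrow> 'a list" where
  "del_at i xs = take i xs @ drop (Suc i) xs"

definition ins_at :: "nat \<Rightarrow> 'a \<Rightarrow> 'a list \<Rightarrow> 'a list" where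
  "ins_at i v xs = take i xs @ v # drop i xs"

definition gamma_edge :: "'a set \<Rightarrow> ('a \<Rightarrow> 'a \<Rightarrow> bool) \<Rightarrow> 'a list \<Rightarrow> 'a list \<Rightarrow> bool" where
  "gamma_edge V E a b \<longleftrightarrow> a \<in> seqs V E \<and> b \<in> seqs V E \<and>
     (\<exists>i. 1 \<le> i \<and> i + 2 \<le> length a \<and> b = del_at i a) \<and> ell E b = ell E a"

definition is_matching :: "'a set \<Rightarrow> ('a \<Rightarrow> 'a \<Rightarrow> bool) \<Rightarrow> ('a list \<times> 'a list) set \<Rightarrow> bool" where
  "is_matching V E M \<longleftrightarrow> (\<forall>(a, b)\<in>M. gamma_edge V E a b) \<and>
     (\<forall>e\<in>M. \<forall>e'\<in>M. e \<noteq> e' \<longrightarrow> {fst e, snd e} \<inter> {fst e', snd e'} = {})"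

text \<open>State insert(i,v): x is matched to (x_0,..,x_i,v,x_{i+1},..,x_k).
  State delete(i): x is matched to x with x_i removed.\<close>
definition state_ins :: "('a list \<times> 'a list) set \<Rightarrow> 'a list \<Rightarrow> nat \<Rightarrow> 'a \<Rightarrow> bool" where
  "state_ins M x i v \<longleftrightarrow> (ins_at (Suc i) v x, x) \<in> M"

definition state_del :: "('a list \<times> 'a list) set \<Rightarrow> 'a list \<Rightarrow> nat \<Rightarrow> bool" where
  "state_del M x i \<longleftrightarrow> (x, del_at i x) \<in> M"

definition prefix_matching :: "'a set \<Rightarrow> ('a \<Rightarrow> 'a \<Rightarrow> bool) \<Rightarrow> ('a list \<times> 'a list) set \<Rightarrow> bool" where
  "prefix_matching V E M \<longleftrightarrow> is_matching V E M \<and>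
     (\<forall>x\<in>seqs V E. \<forall>i v. state_ins M x i v \<longrightarrow>
        (\<forall>y\<in>seqs V E. i + 2 \<le> length y \<and> take (i + 2) y = take (i + 2) x \<longrightarrow> state_ins M y i v)) \<and>
     (\<forall>x\<in>seqs V E. \<forall>i. state_del M x i \<longrightarrow>
        (\<forall>y\<in>seqs V E. i + 2 \<le> length y \<and> take (i + 2) y = take (i + 2) x \<longrightarrow> state_del M y i))"

end

theory Submission
  imports Defs
begin

text \<open>Consecutive cycle members differ in a single entry: since c i = d i - 1, the vertex
  u i is reinserted exactly where a i lost an entry, so a (i+1) = (a i)[d i := u i]. Call the
  gap at q of a sequence the distance between its entries q - 1 and q. The step
  a i \<rightarrow> b i \<rightarrow> a (i+1) leaves all gaps away from d i and d i + 1 untouched and, by hypothesis,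
  makes the gap at d i of a (i+1) a unit gap. Deleting entry d i preserves the length of both
  a i and a (i+1), so in both the gaps at d i and d i + 1 sum to the distance between entries
  d i - 1 and d i + 1; hence unit gaps at d i and d i + 1 in a i force a unit gap at d i + 1 in
  a (i+1). By induction on the position m, a unit gap created at m by a step with d i = m
  survives all later steps, and going once around the cycle it is present in a i itself.\<close>

lemma ell_Cons_Cons: "ell E (x # y # zs) = gdist E x y + ell E (y # zs)"
proof -
  have "ell E (x # y # zs) =
      (\<Sum>j<Suc (length zs). gdist E ((x # y # zs) ! j) ((x # y # zs) ! Suc j))"
    by (simp add: ell_def)
  also have "\<dots> = gdist E x y + (\<Sum>j<length zs. gdist E ((y # zs) ! j) ((y # zs) ! Suc j))"
    by (subst sum.lessThan_Suc_shift) simp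
  finally show ?thesis by (simp add: ell_def)
qed

lemma ell_del_at:
  assumes "1 \<le> m" "Suc m < length xs"
  shows "ell E xs + gdist E (xs ! (m - 1)) (xs ! Suc m) =
    ell E (del_at m xs) + gdist E (xs ! (m - 1)) (xs ! m) + gdist E (xs ! m) (xs ! Suc m)"
  using assms
proof (induction m arbitrary: xs)
  case 0
  then show ?case by simp
next
  case (Suc n)
  then obtain x y ys where xs: "xs = x # y # ys"
    by (cases xs; cases "tl xs") auto
  show ?case
  proof (cases n)
    case 0
    with Suc.prems obtain z zs where "ys = z # zs" by (cases ys) (auto simp: xs)
    with 0 show ?thesis by (simp add: xs del_at_def ell_Cons_Cons)
  next
    case (Suc n')
    have "del_at (Suc n) xs = x # del_at n (y # ys)" by (simp add: xs del_at_def)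
    moreover have "del_at n (y # ys) = y # del_at n' ys" by (simp add: Suc del_at_def)
    ultimately show ?thesis
      using Suc.IH[of "y # ys"] Suc.prems Suc by (simp add: xs ell_Cons_Cons)
  qed
qed

lemma ins_at_del_at: "i < length xs \<Longrightarrow> ins_at i v (del_at i xs) = xs[i := v]"
  by (simp add: ins_at_def del_at_def upd_conv_take_nth_drop min_def)

lemma del_at_list_update: "i < length xs \<Longrightarrow> del_at i (xs[i := v]) = del_at i xs"
  by (simp add: del_at_def upd_conv_take_nth_drop min_def)

lemma unit_gap_shifts_under_update:
  assumes m: "1 \<le> m" "Suc m < length xs"
    and del: "ell E (del_at m xs) = ell E xs"
    and upd: "ell E (xs[m := v]) = ell E xs"
    and left: "gdist E (xs ! (m - 1)) (xs ! m) = 1"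
    and right: "gdist E (xs ! m) (xs ! Suc m) = 1"
    and new_left: "gdist E (xs ! (m - 1)) v = 1"
  shows "gdist E v (xs ! Suc m) = 1"
proof -
  have "gdist E (xs ! (m - 1)) (xs ! Suc m) = 2"
    using ell_del_at[OF m, of E] del left right by simp
  moreover have "Suc m < length (xs[m := v])" using m by simp
  note ell_del_at[OF m(1) this, of E]
  ultimately show ?thesis
    using m del upd new_left by (simp add: del_at_list_update)
qed

lemma periodic_reset_invariant:
  fixes P :: "nat \<Rightarrow> nat \<Rightarrow> bool" and d :: "nat \<Rightarrow> nat"
  assumes p: "p \<ge> 1"
    and periodic: "\<And>q t. P q (t + p) \<Longrightarrow> P q t"
    and reset: "\<And>t. P (d t) (Suc t)"
    and frame: "\<And>q t. P q t \<Longrightarrow> q \<noteq> d t \<Longrightarrow> q \<noteq> Suc (d t) \<Longrightarrow> P q (Suc t)"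
    and shift: "\<And>t. P (d t) t \<Longrightarrow> P (Suc (d t)) t \<Longrightarrow> P (Suc (d t)) (Suc t)"
  shows "P (d i) i"
proof -
  have "\<forall>i. d i = m \<longrightarrow> P m i" for m
  proof (induction m rule: less_induct)
    case (less m)
    show ?case
    proof (intro allI impI)
      fix i assume di: "d i = m"
      have "P m (Suc i + n)" for n
      proof (induction n)
        case 0
        show ?case using reset[of i] di by simp
      next
        case (Suc n)
        let ?t = "Suc i + n"
        consider "m = d ?t" | "m = Suc (d ?t)" | "m \<noteq> d ?t" "m \<noteq> Suc (d ?t)" by blast
        then show ?case
        proof cases
          case 1
          then show ?thesis using reset[of ?t] by simp
        next
          case 2
          then have "P (d ?t) ?t" using less.IH by simp
          then show ?thesis using shift[of ?t] Suc.IH 2 by simp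
        next
          case 3
          then show ?thesis using frame[OF Suc.IH] by simp
        qed
      qed
      from this[of "p - 1"] show "P m i" using p periodic by simp
    qed
  qed
  then show ?thesis by blast
qed

theorem lemma3p8:
  fixes V :: "'a set" and E :: "'a \<Rightarrow> 'a \<Rightarrow> bool"
    and M :: "('a list \<times> 'a list) set"
    and p k l :: nat
    and a b :: "nat \<Rightarrow> 'a list" and c d :: "nat \<Rightarrow> nat" and u :: "nat \<Rightarrow> 'a"
  assumes G: "simple_connected_graph V E"
    and PM: "prefix_matching V E M"
    and p: "p \<ge> 1"
    and per_a: "\<And>i. a (i + p) = a i" and per_b: "\<And>i. b (i + p) = b i"
    and per_c: "\<And>i. c (i + p) = c i" and per_d: "\<And>i. d (i + p) = d i"
    and per_u: "\<And>i. u (i + p) = u i"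
    and a_in: "\<And>i. a i \<in> Ikl V E k l"
    and b_in: "\<And>i. b i \<in> Ikl V E (k - 1) l"
    and ab_edge: "\<And>i. gamma_edge V E (a i) (b i)"
    and ab_notM: "\<And>i. (a i, b i) \<notin> M"
    and ba_M: "\<And>i. (a (Suc i), b i) \<in> M"
    and d_pos: "\<And>i. 1 \<le> d i \<and> d i + 1 \<le> k"
    and d_del: "\<And>i. b i = del_at (d i) (a i)"
    and c_ins: "\<And>i. a (Suc i) = ins_at (Suc (c i)) (u i) (b i)"
    and dc: "\<And>i. d i = c i + 1"
    and dist1: "\<And>i. gdist E (a (Suc i) ! c i) (a (Suc i) ! (c i + 1)) = 1"
  shows "\<forall>i. gdist E (a i ! (d i - 1)) (a i ! d i) = 1"
proof -
  define P where "P q t \<longleftrightarrow> gdist E (a t ! (q - 1)) (a t ! q) = 1" for q t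
  have len: "length (a t) = Suc k" and ell_a: "ell E (a t) = l" and ell_b: "ell E (b t) = l"
    for t using a_in[of t] b_in[of t] by (simp_all add: Ikl_def)
  have upd: "a (Suc t) = (a t)[d t := u t]" for t
    using c_ins[of t] d_del[of t] dc[of t] d_pos[of t] len[of t] by (simp add: ins_at_del_at)
  have reset: "P (d t) (Suc t)" for t
    using dist1[of t] dc[of t] by (simp add: P_def)
  have "P (d i) i" for i
  proof (rule periodic_reset_invariant[of p P d])
    show "P (d t) (Suc t)" for t by (fact reset)
    show "P q t \<Longrightarrow> P q (Suc t)" if "q \<noteq> d t" "q \<noteq> Suc (d t)" for q t
      using that d_pos[of t] by (simp add: P_def upd)
    show "P (Suc (d t)) (Suc t)" if "P (d t) t" "P (Suc (d t)) t" for t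
    proof -
      have m: "1 \<le> d t" "Suc (d t) < length (a t)" using d_pos[of t] len[of t] by auto
      have "gdist E (a t ! (d t - 1)) (u t) = 1"
        using reset[of t] m by (simp add: P_def upd)
      then have "gdist E (u t) (a t ! Suc (d t)) = 1"
        using unit_gap_shifts_under_update[OF m] that ell_a[of t] ell_a[of "Suc t"] ell_b[of t]
        by (simp add: P_def upd d_del)
      then show ?thesis using m by (simp add: P_def upd)
    qed
  qed (use p per_a P_def in simp_all)
  then show ?thesis by (simp add: P_def)
qed

end
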